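(* For each infinite matrix $A=(A(i,j))_{i,j\in\mathbb{N}}$ with entries in $\{0,1\}$ and without identically zero rows, there exists an $A_\infty$-branching system on the measure space $([0,\infty),\mu)$, where $\mu$ is Lebesgue measure.
   Context: Notation: for measurable $Y,Z\subseteq X$, write $Y\stackrel{\mu\text{-a.e.}}{=}Z$ if $\mu(Y\setminus Z)=0=\mu(Z\setminus Y)$. For a measurable map $h$ on a measurable set $W$, $\mu\circ h$ is the measure $E\mapsto\mu(h(E))$ on $W$. For finite $U,V\subseteq\mathbb{N}$ and $j\in\mathbb{N}$ put $A(U,V,j)=\prod_{u\in U}A(u,j)\prod_{v\in V}(1-A(v,j))$. A transformation $F$ is nonsingular if $\mu(F^{-1}(E))=0$ whenever $\mu(E)=0$. An $A_\infty$-branching system on a $\sigma$-finite measure space $(X,\mu)$ is a family $(\{f_i\}_{i=1}^\infty,\{D_i\}_{i=1}^\infty)$ together with a nonsingular transformation $F:X\to X$ such that: (1) $f_i:D_i\to R_i$ is measurable, $D_i,R_i$ are measurable subsets of $X$, and $f_i(D_i)\stackrel{\mu\text{-a.e.}}{=}R_i$ for each $i$; (2) $F\circ f_i=\mathrm{id}_{D_i}$ $\mu$-a.e. on $D_i$ for each $i$; (3) $\mu(R_i\cap R_j)=0$ for $i\neq j$; (4) $\mu(R_j\cap D_i)=0$ if $A(i,j)=0$ and $\mu(R_j\setminus D_i)=0$ if $A(i,j)=1$; (5) for each pair $U,V$ of finite subsets of $\mathbb{N}$ such that $A(U,V,j)=1$ for only finitely many $j$, $\bigcap_{u\in U}D_u\cap\bigcap_{v\in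 V}(X\setminus D_v)\stackrel{\mu\text{-a.e.}}{=}\bigcup_{j:A(U,V,j)=1}R_j$; (6) there exist the Radon-Nikodym derivatives $\Phi_{f_i}$ of $\mu\circ f_i$ with respect to $\mu$ on $D_i$ and $\Phi_{f_i^{-1}}$ of $\mu\circ f_i^{-1}$ with respect to $\mu$ on $R_i$, where $f_i^{-1}:=F|_{R_i}$. *)

theory Defs
  imports "HOL-Analysis.Analysis"
begin

definition ae_eq_set :: "'a measure \<Rightarrow> 'a set \<Rightarrow> 'a set \<Rightarrow> bool" where
  "ae_eq_set M Y Z \<longleftrightarrow> Y \<in> sets M \<and> Z \<in> sets M \<and>
     emeasure M (Y - Z) = 0 \<and> emeasure M (Z - Y) = 0"

definition AUV :: "(nat \<Rightarrow> nat \<Rightarrow> nat) \<Rightarrow> nat set \<Rightarrow> nat set \<Rightarrow> nat \<Rightarrow> nat" where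
  "AUV A U V j = (\<Prod>u\<in>U. A u j) * (\<Prod>v\<in>V. 1 - A v j)"

definition nonsingular :: "'a measure \<Rightarrow> ('a \<Rightarrow> 'a) \<Rightarrow> bool" where
  "nonsingular M F \<longleftrightarrow> F \<in> measurable M M \<and>
     (\<forall>E\<in>sets M. emeasure M E = 0 \<longrightarrow> emeasure M (F -` E \<inter> space M) = 0)"

definition has_RN_deriv_image :: "'a measure \<Rightarrow> ('a \<Rightarrow> 'a) \<Rightarrow> 'a set \<Rightarrow> bool" where
  "has_RN_deriv_image M h W \<longleftrightarrow>
     (\<exists>\<Phi>. \<Phi> \<in> borel_measurable (restrict_space M W) \<and>
        (\<forall>E. E \<in> sets M \<and> E \<subseteq> W \<longrightarrow>
             h ` E \<in> sets M \<and>
             emeasure M (h ` E) = (\<integral>\<^sup>+ x. \<Phi> x * indicator E x \<partial>M)))"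

definition A_infty_branching_system ::
  "(nat \<Rightarrow> nat \<Rightarrow> nat) \<Rightarrow> 'a measure \<Rightarrow> (nat \<Rightarrow> 'a \<Rightarrow> 'a) \<Rightarrow> (nat \<Rightarrow> 'a set)
     \<Rightarrow> (nat \<Rightarrow> 'a set) \<Rightarrow> ('a \<Rightarrow> 'a) \<Rightarrow> bool" where
  "A_infty_branching_system A M f D R F \<longleftrightarrow>
     sigma_finite_measure M \<and>
     nonsingular M F \<and>
     \<comment> \<open>(1)\<close>
     (\<forall>i. D i \<in> sets M \<and> R i \<in> sets M \<and>
          f i \<in> measurable (restrict_space M (D i)) M \<and>
          (\<forall>x\<in>D i. f i x \<in> R i) \<and>
          ae_eq_set M (f i ` D i) (R i)) \<and>
     \<comment> \<open>(2)\<close>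
     (\<forall>i. AE x in M. x \<in> D i \<longrightarrow> F (f i x) = x) \<and>
     \<comment> \<open>(3)\<close>
     (\<forall>i j. i \<noteq> j \<longrightarrow> emeasure M (R i \<inter> R j) = 0) \<and>
     \<comment> \<open>(4)\<close>
     (\<forall>i j. (A i j = 0 \<longrightarrow> emeasure M (R j \<inter> D i) = 0) \<and>
            (A i j = 1 \<longrightarrow> emeasure M (R j - D i) = 0)) \<and>
     \<comment> \<open>(5)\<close>
     (\<forall>U V. finite U \<and> finite V \<and> finite {j. AUV A U V j = 1} \<longrightarrow>
        ae_eq_set M (space M \<inter> (\<Inter>u\<in>U. D u) \<inter> (\<Inter>v\<in>V. space M - D v))
                    (\<Union>j\<in>{j. AUV A U V j = 1}. R j)) \<and>
     \<comment> \<open>(6)\<close>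
     (\<forall>i. has_RN_deriv_image M (f i) (D i) \<and> has_RN_deriv_image M F (R i))"

end

theory Submission
  imports Defs
begin

text \<open>Cut \<open>[0,\<infinity>)\<close> into the unit cells \<open>[n, n+1)\<close> and give cell \<open>n\<close> the colour
  \<open>j\<close>, where \<open>n\<close> encodes the pair \<open>(j, m)\<close>; then every colour occurs on infinitely many
  cells. Let \<open>R\<^sub>j\<close> be the union of the cells of colour \<open>j\<close> and \<open>D\<^sub>i\<close> the union of the
  cells whose colour \<open>j\<close> has \<open>A(i,j) = 1\<close>. As row \<open>i\<close> is nonzero, both consist of
  infinitely many cells, so a bijection between their index sets defines a map \<open>f\<^sub>i\<close>
  translating each cell of \<open>D\<^sub>i\<close> onto a cell of \<open>R\<^sub>i\<close>; since the \<open>R\<^sub>i\<close> are disjoint, a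
  single cellwise translation \<open>F\<close> undoes all the \<open>f\<^sub>i\<close>. Translations preserve Lebesgue
  measure, so all Radon-Nikodym derivatives are \<open>1\<close>, and conditions (1)-(5) even hold
  exactly rather than almost everywhere.\<close>

definition cell :: "nat \<Rightarrow> real set" where
  "cell n = {real n ..< real n + 1}"

definition cells :: "nat set \<Rightarrow> real set" where
  "cells S = (\<Union>n\<in>S. cell n)"

definition cell_shift :: "(nat \<Rightarrow> nat) \<Rightarrow> real \<Rightarrow> real" where
  "cell_shift g x = x - real (nat \<lfloor>x\<rfloor>) + real (g (nat \<lfloor>x\<rfloor>))"

abbreviation lebesgue_nonneg :: "real measure" where
  "lebesgue_nonneg \<equiv> restrict_space lebesgue {0..}"

lemma nat_floor_cell: "x \<in> cell n \<Longrightarrow> nat \<lfloor>x\<rfloor> = n"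
  unfolding cell_def by (simp add: floor_eq_iff nat_eq_iff)

lemma cell_nat_floor: "0 \<le> x \<Longrightarrow> x \<in> cell (nat \<lfloor>x\<rfloor>)"
  unfolding cell_def by auto

lemma cell_nonneg: "x \<in> cell n \<Longrightarrow> 0 \<le> x"
  unfolding cell_def by auto

lemma mem_cells_iff: "x \<in> cells S \<longleftrightarrow> 0 \<le> x \<and> nat \<lfloor>x\<rfloor> \<in> S"
  unfolding cells_def using nat_floor_cell cell_nat_floor cell_nonneg by blast

lemma cell_subset_nonneg: "cell n \<subseteq> {0..}"
  unfolding cell_def by auto

lemma cell_shift_cell: "x \<in> cell n \<Longrightarrow> cell_shift g x = x + (real (g n) - real n)"
  unfolding cell_shift_def using nat_floor_cell by simp

lemma cell_shift_in_cell: "x \<in> cell n \<Longrightarrow> cell_shift g x \<in> cell (g n)"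
  using cell_shift_cell[of x n g] unfolding cell_def by auto

lemma image_cell_shift_cells:
  assumes "bij_betw g S T"
  shows "cell_shift g ` cells S = cells T"
proof (intro equalityI subsetI)
  fix y assume "y \<in> cell_shift g ` cells S"
  then obtain x n where "x \<in> cell n" "n \<in> S" "y = cell_shift g x"
    unfolding cells_def by blast
  then show "y \<in> cells T"
    using cell_shift_in_cell bij_betwE[OF assms] unfolding cells_def by blast
next
  fix y assume "y \<in> cells T"
  then obtain m where y: "y \<in> cell m" "m \<in> T"
    unfolding cells_def by blast
  define n where "n = inv_into S g m"
  have n: "n \<in> S" "g n = m"
    using y(2) assms unfolding n_def by (auto simp: bij_betw_def intro: inv_into_into f_inv_into_f)
  define x where "x = y + (real n - real m)"
  have x: "x \<in> cell n"
    using y(1) unfolding x_def cell_def by auto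
  then have "cell_shift g x = y"
    using n unfolding x_def by (simp add: cell_shift_cell)
  with x n(1) show "y \<in> cell_shift g ` cells S"
    unfolding cells_def by blast
qed

lemma sets_lebesgue_nonneg_iff: "E \<in> sets lebesgue_nonneg \<longleftrightarrow> E \<subseteq> {0..} \<and> E \<in> sets lebesgue"
  by (rule sets_restrict_space_iff) simp

lemma emeasure_lebesgue_nonneg: "E \<subseteq> {0..} \<Longrightarrow> emeasure lebesgue_nonneg E = emeasure lebesgue E"
  by (rule emeasure_restrict_space) auto

lemma sets_lebesgue_cell: "cell n \<in> sets lebesgue"
  unfolding cell_def by simp

lemma sets_cells: "cells S \<in> sets lebesgue_nonneg"
proof -
  have "cells S = (\<Union>n. if n \<in> S then cell n else {})"
    unfolding cells_def by auto
  also have "\<dots> \<in> sets lebesgue"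
    using sets_lebesgue_cell by (intro sets.countable_UN) auto
  finally show ?thesis
    by (auto simp: sets_lebesgue_nonneg_iff mem_cells_iff)
qed

lemma sigma_finite_lebesgue_nonneg: "sigma_finite_measure lebesgue_nonneg"
  unfolding sigma_finite_measure_def
proof (intro exI[of _ "range cell"] conjI ballI)
  show "range cell \<subseteq> sets lebesgue_nonneg"
    using sets_lebesgue_cell by (auto simp: sets_lebesgue_nonneg_iff dest: cell_nonneg)
  show "\<Union> (range cell) = space lebesgue_nonneg"
    using cell_nat_floor by (auto dest: cell_nonneg)
  fix C assume "C \<in> range cell"
  then obtain n where C: "C = cell n" by blast
  have "emeasure lebesgue_nonneg (cell n) = emeasure lebesgue (cell n)"
    by (rule emeasure_lebesgue_nonneg) (auto dest: cell_nonneg)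
  then show "emeasure lebesgue_nonneg C \<noteq> \<infinity>"
    by (simp add: C cell_def)
qed simp

lemma
  assumes "E \<in> sets lebesgue"
  shows sets_lebesgue_translation_right: "(\<lambda>x::real. x + c) ` E \<in> sets lebesgue"
    and emeasure_lebesgue_translation_right:
      "emeasure lebesgue ((\<lambda>x::real. x + c) ` E) = emeasure lebesgue E"
proof -
  have "(\<lambda>x. x + c) ` E = (\<lambda>x. c + x) ` E"
    by (simp add: add.commute)
  then show "(\<lambda>x::real. x + c) ` E \<in> sets lebesgue"
    using lebesgue_sets_translation[OF assms, of c] by simp
  show "emeasure lebesgue ((\<lambda>x::real. x + c) ` E) = emeasure lebesgue E"
    using emeasure_lebesgue_affine[of 1 c E] by simp
qed

lemma vimage_cell_shift:
  "cell_shift g -` E \<inter> {0..} = (\<Union>n. cell n \<inter> (\<lambda>x. x + (real n - real (g n))) ` E)"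
proof (intro set_eqI iffI)
  fix x assume x: "x \<in> cell_shift g -` E \<inter> {0..}"
  then have c: "x \<in> cell (nat \<lfloor>x\<rfloor>)"
    using cell_nat_floor by auto
  then have "x = cell_shift g x + (real (nat \<lfloor>x\<rfloor>) - real (g (nat \<lfloor>x\<rfloor>)))"
    by (simp add: cell_shift_cell)
  with x c show "x \<in> (\<Union>n. cell n \<inter> (\<lambda>x. x + (real n - real (g n))) ` E)"
    by blast
qed (auto simp: cell_shift_cell intro: cell_nonneg)

lemma measurable_cell_shift: "cell_shift g \<in> lebesgue_nonneg \<rightarrow>\<^sub>M lebesgue_nonneg"
proof (rule measurableI)
  fix x assume "x \<in> space lebesgue_nonneg"
  then have "cell_shift g x \<in> cell (g (nat \<lfloor>x\<rfloor>))"
    using cell_nat_floor cell_shift_in_cell by simp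
  then show "cell_shift g x \<in> space lebesgue_nonneg"
    by (auto dest: cell_nonneg)
next
  fix E assume "E \<in> sets lebesgue_nonneg"
  then have "(\<Union>n. cell n \<inter> (\<lambda>x. x + (real n - real (g n))) ` E) \<in> sets lebesgue"
    using sets_lebesgue_cell sets_lebesgue_translation_right
    by (intro sets.countable_UN) (auto simp: sets_lebesgue_nonneg_iff)
  then show "cell_shift g -` E \<inter> space lebesgue_nonneg \<in> sets lebesgue_nonneg"
    by (simp add: vimage_cell_shift[symmetric] sets_lebesgue_nonneg_iff)
qed

lemma nonsingular_cell_shift: "nonsingular lebesgue_nonneg (cell_shift g)"
  unfolding nonsingular_def
proof (intro conjI measurable_cell_shift ballI impI)
  fix E assume E: "E \<in> sets lebesgue_nonneg" "emeasure lebesgue_nonneg E = 0"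
  then have "E \<in> null_sets lebesgue"
    by (auto simp: sets_lebesgue_nonneg_iff emeasure_lebesgue_nonneg null_sets_def)
  then have "(\<Union>n. (\<lambda>x. x + (real n - real (g n))) ` E) \<in> null_sets lebesgue"
    using sets_lebesgue_translation_right emeasure_lebesgue_translation_right
    by (intro null_sets_UN) (auto simp: null_sets_def)
  moreover have "cell_shift g -` E \<inter> {0..} \<in> sets lebesgue"
    using measurable_sets[OF measurable_cell_shift E(1)] by (simp add: sets_lebesgue_nonneg_iff)
  moreover have "cell_shift g -` E \<inter> {0..} \<subseteq> (\<Union>n. (\<lambda>x. x + (real n - real (g n))) ` E)"
    unfolding vimage_cell_shift by blast
  ultimately have "cell_shift g -` E \<inter> {0..} \<in> null_sets lebesgue"
    by (rule null_sets_subset)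
  then show "emeasure lebesgue_nonneg (cell_shift g -` E \<inter> space lebesgue_nonneg) = 0"
    by (simp add: emeasure_lebesgue_nonneg null_setsD1)
qed

lemma translate_cell_subset: "(\<lambda>x. x + (real (g n) - real n)) ` (E \<inter> cell n) \<subseteq> cell (g n)"
  using cell_shift_in_cell[of _ n g] by (auto simp: cell_shift_cell)

lemma image_cell_shift_eq_UN:
  assumes "E \<subseteq> {0..}"
  shows "cell_shift g ` E = (\<Union>n. (\<lambda>x. x + (real (g n) - real n)) ` (E \<inter> cell n))"
proof -
  have "E = (\<Union>n. E \<inter> cell n)"
    using assms cell_nat_floor by auto
  then have "cell_shift g ` E = cell_shift g ` (\<Union>n. E \<inter> cell n)"
    by (rule arg_cong)
  also have "\<dots> = (\<Union>n. cell_shift g ` (E \<inter> cell n))"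
    by (rule image_UN)
  also have "\<dots> = (\<Union>n. (\<lambda>x. x + (real (g n) - real n)) ` (E \<inter> cell n))"
    by (intro arg_cong[where f = Union] image_cong refl) (auto simp: cell_shift_cell)
  finally show ?thesis .
qed

lemma disjoint_family_translate_cells:
  assumes "inj_on g S" "E \<subseteq> cells S"
  shows "disjoint_family (\<lambda>n. (\<lambda>x. x + (real (g n) - real n)) ` (E \<inter> cell n))"
  unfolding disjoint_family_on_def
proof (intro ballI impI equals0I)
  fix n m y assume "n \<noteq> m"
    and y: "y \<in> (\<lambda>x. x + (real (g n) - real n)) ` (E \<inter> cell n) \<inter>
               (\<lambda>x. x + (real (g m) - real m)) ` (E \<inter> cell m)"
  then have "E \<inter> cell n \<noteq> {}" "E \<inter> cell m \<noteq> {}"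
    by auto
  then have "n \<in> S" "m \<in> S"
    using assms(2) nat_floor_cell by (auto simp: mem_cells_iff)
  moreover have "y \<in> cell (g n)" "y \<in> cell (g m)"
    using y translate_cell_subset[of g n E] translate_cell_subset[of g m E] by blast+
  then have "g n = g m"
    by (metis nat_floor_cell)
  ultimately show False
    using \<open>n \<noteq> m\<close> assms(1) by (auto dest: inj_onD)
qed

lemma sets_image_cell_shift:
  assumes "E \<in> sets lebesgue_nonneg"
  shows "cell_shift g ` E \<in> sets lebesgue_nonneg"
proof -
  have E: "E \<subseteq> {0..}" "E \<in> sets lebesgue"
    using assms by (auto simp: sets_lebesgue_nonneg_iff)
  have "(\<Union>n. (\<lambda>x. x + (real (g n) - real n)) ` (E \<inter> cell n)) \<in> sets lebesgue"
    using E(2) sets_lebesgue_cell by (auto intro!: sets.countable_UN sets_lebesgue_translation_right)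
  moreover have "(\<Union>n. (\<lambda>x. x + (real (g n) - real n)) ` (E \<inter> cell n)) \<subseteq> {0..}"
    by (intro UN_least subset_trans[OF translate_cell_subset cell_subset_nonneg])
  ultimately show ?thesis
    by (simp add: image_cell_shift_eq_UN[OF E(1)] sets_lebesgue_nonneg_iff)
qed

lemma emeasure_image_cell_shift:
  assumes "inj_on g S" "E \<in> sets lebesgue_nonneg" "E \<subseteq> cells S"
  shows "emeasure lebesgue_nonneg (cell_shift g ` E) = emeasure lebesgue_nonneg E"
proof -
  define P where "P n = E \<inter> cell n" for n
  have E: "E \<subseteq> {0..}" "E \<in> sets lebesgue"
    using assms(2) by (auto simp: sets_lebesgue_nonneg_iff)
  have P: "P n \<in> sets lebesgue" for n
    using E(2) sets_lebesgue_cell by (auto simp: P_def)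
  have "emeasure lebesgue (cell_shift g ` E) =
      emeasure lebesgue (\<Union>n. (\<lambda>x. x + (real (g n) - real n)) ` P n)"
    by (simp add: image_cell_shift_eq_UN[OF E(1)] P_def)
  also have "\<dots> = (\<Sum>n. emeasure lebesgue ((\<lambda>x. x + (real (g n) - real n)) ` P n))"
    using P sets_lebesgue_translation_right disjoint_family_translate_cells[OF assms(1,3)]
    by (intro suminf_emeasure[symmetric]) (auto simp: P_def)
  also have "\<dots> = (\<Sum>n. emeasure lebesgue (P n))"
    using P by (simp add: emeasure_lebesgue_translation_right)
  also have "\<dots> = emeasure lebesgue (\<Union>n. P n)"
    using P by (intro suminf_emeasure) (auto simp: P_def disjoint_family_on_def dest: nat_floor_cell)
  also have "(\<Union>n. P n) = E"
    using E(1) cell_nat_floor by (auto simp: P_def)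
  finally show ?thesis
    using sets.sets_into_space[OF sets_image_cell_shift[OF assms(2)]] E(1)
    by (simp add: emeasure_lebesgue_nonneg)
qed

lemma has_RN_deriv_image_cell_shift:
  assumes "inj_on g S"
  shows "has_RN_deriv_image lebesgue_nonneg (cell_shift g) (cells S)"
  unfolding has_RN_deriv_image_def
proof (intro exI[of _ "\<lambda>_. 1"] conjI allI impI)
  fix E assume E: "E \<in> sets lebesgue_nonneg \<and> E \<subseteq> cells S"
  then show "cell_shift g ` E \<in> sets lebesgue_nonneg"
    by (simp add: sets_image_cell_shift)
  show "emeasure lebesgue_nonneg (cell_shift g ` E) = (\<integral>\<^sup>+ x. 1 * indicator E x \<partial>lebesgue_nonneg)"
    using E emeasure_image_cell_shift[OF assms] by simp
qed simp

definition colour :: "nat \<Rightarrow> nat" where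
  "colour n = fst (prod_decode n)"

definition domain_cells :: "(nat \<Rightarrow> nat \<Rightarrow> nat) \<Rightarrow> nat \<Rightarrow> nat set" where
  "domain_cells A i = {n. A i (colour n) = 1}"

lemma infinite_colour_class: "infinite (colour -` {j})"
proof -
  have "inj (\<lambda>m. prod_encode (j, m))"
    by (rule injI) (simp add: prod_encode_eq)
  then have "infinite (range (\<lambda>m. prod_encode (j, m)))"
    by (rule range_inj_infinite)
  moreover have "range (\<lambda>m. prod_encode (j, m)) \<subseteq> colour -` {j}"
    by (auto simp: colour_def)
  ultimately show ?thesis
    using infinite_super by blast
qed

lemma bij_betw_infinite_nat_sets:
  fixes S T :: "nat set"
  assumes "infinite S" "infinite T"
  obtains g where "bij_betw g S T"
  using bij_betw_trans[OF bij_betw_inv_into[OF bij_enumerate[OF assms(1)]] bij_enumerate[OF assms(2)]]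
  by blast

lemma AUV_eq_1_iff:
  assumes "\<And>i j. A i j \<in> {0, 1}" "finite U" "finite V"
  shows "AUV A U V j = 1 \<longleftrightarrow> (\<forall>u\<in>U. A u j = 1) \<and> (\<forall>v\<in>V. A v j = 0)"
proof -
  have "(1::nat) - A v j = 1 \<longleftrightarrow> A v j = 0" for v
    using assms(1)[of v j] by auto
  moreover have "AUV A U V j = 1 \<longleftrightarrow> (\<Prod>u\<in>U. A u j) = 1 \<and> (\<Prod>v\<in>V. 1 - A v j) = 1"
    unfolding AUV_def by (rule nat_mult_eq_1_iff)
  ultimately show ?thesis
    using prod_eq_1_iff[OF assms(2), of "\<lambda>u. A u j"] prod_eq_1_iff[OF assms(3), of "\<lambda>v. 1 - A v j"]
    by auto
qed

locale cell_branching =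
  fixes A :: "nat \<Rightarrow> nat \<Rightarrow> nat" and \<sigma> :: "nat \<Rightarrow> nat \<Rightarrow> nat"
  assumes zero_one: "\<And>i j. A i j \<in> {0, 1}"
    and bij_\<sigma>: "\<And>i. bij_betw (\<sigma> i) (domain_cells A i) (colour -` {i})"
begin

definition D :: "nat \<Rightarrow> real set" where
  "D i = cells (domain_cells A i)"

definition R :: "nat \<Rightarrow> real set" where
  "R i = cells (colour -` {i})"

definition f :: "nat \<Rightarrow> real \<Rightarrow> real" where
  "f i = cell_shift (\<sigma> i)"

text \<open>A cell of colour \<open>i\<close> lies in \<open>R i\<close> only, so its colour tells which \<open>\<sigma> i\<close> to invert.\<close>

definition inverse_index :: "nat \<Rightarrow> nat" where
  "inverse_index m = inv_into (domain_cells A (colour m)) (\<sigma> (colour m)) m"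

definition F :: "real \<Rightarrow> real" where
  "F = cell_shift inverse_index"

lemma inj_on_\<sigma>: "inj_on (\<sigma> i) (domain_cells A i)"
  using bij_\<sigma> by (auto simp: bij_betw_def)

lemma inverse_index_\<sigma>: "n \<in> domain_cells A i \<Longrightarrow> inverse_index (\<sigma> i n) = n"
  using bij_betwE[OF bij_\<sigma>] inj_on_\<sigma> by (auto simp: inverse_index_def inv_into_f_f)

lemma inj_on_inverse_index: "inj_on inverse_index (colour -` {i})"
proof -
  have "inj_on (inv_into (domain_cells A i) (\<sigma> i)) (colour -` {i})"
    using bij_\<sigma>[of i] by (auto simp: bij_betw_def intro: inj_on_inv_into)
  moreover have "inj_on inverse_index (colour -` {i}) = inj_on (inv_into (domain_cells A i) (\<sigma> i)) (colour -` {i})"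
    by (rule inj_on_cong) (simp add: inverse_index_def)
  ultimately show ?thesis
    by simp
qed

lemma mem_D_iff: "x \<in> D i \<longleftrightarrow> 0 \<le> x \<and> A i (colour (nat \<lfloor>x\<rfloor>)) = 1"
  by (simp add: D_def domain_cells_def mem_cells_iff)

lemma mem_R_iff: "x \<in> R i \<longleftrightarrow> 0 \<le> x \<and> colour (nat \<lfloor>x\<rfloor>) = i"
  by (simp add: R_def mem_cells_iff)

lemma image_f_D: "f i ` D i = R i"
  unfolding f_def D_def R_def by (rule image_cell_shift_cells[OF bij_\<sigma>])

lemma F_f_inverse:
  assumes "x \<in> D i"
  shows "F (f i x) = x"
proof -
  define n where "n = nat \<lfloor>x\<rfloor>"
  have x: "x \<in> cell n" "n \<in> domain_cells A i"
    using assms cell_nat_floor by (auto simp: D_def mem_cells_iff n_def)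
  then have "f i x \<in> cell (\<sigma> i n)"
    unfolding f_def using cell_shift_in_cell by blast
  then show ?thesis
    using x by (simp add: F_def f_def cell_shift_cell inverse_index_\<sigma>)
qed

lemma R_disjoint: "i \<noteq> j \<Longrightarrow> R i \<inter> R j = {}"
  by (auto simp: mem_R_iff)

lemma R_inter_D: "A i j = 0 \<Longrightarrow> R j \<inter> D i = {}"
  by (auto simp: mem_R_iff mem_D_iff)

lemma R_subset_D: "A i j = 1 \<Longrightarrow> R j \<subseteq> D i"
  by (auto simp: mem_R_iff mem_D_iff)

lemma D_boolean_combination:
  assumes "finite U" "finite V"
  shows "{0..} \<inter> (\<Inter>u\<in>U. D u) \<inter> (\<Inter>v\<in>V. {0..} - D v) = (\<Union>j\<in>{j. AUV A U V j = 1}. R j)"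
proof -
  have "A v j \<noteq> 1 \<longleftrightarrow> A v j = 0" for v j
    using zero_one[of v j] by auto
  then show ?thesis
    using AUV_eq_1_iff[OF zero_one assms] by (auto simp: mem_D_iff mem_R_iff)
qed

lemma branching_system: "A_infty_branching_system A lebesgue_nonneg f D R F"
  unfolding A_infty_branching_system_def
proof (intro conjI allI impI sigma_finite_lebesgue_nonneg)
  show "nonsingular lebesgue_nonneg F"
    unfolding F_def by (rule nonsingular_cell_shift)
  fix i
  show "D i \<in> sets lebesgue_nonneg" "R i \<in> sets lebesgue_nonneg"
    unfolding D_def R_def by (rule sets_cells)+
  show "f i \<in> restrict_space lebesgue_nonneg (D i) \<rightarrow>\<^sub>M lebesgue_nonneg"
    unfolding f_def by (rule measurable_restrict_space1[OF measurable_cell_shift])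
  show "\<forall>x\<in>D i. f i x \<in> R i" "ae_eq_set lebesgue_nonneg (f i ` D i) (R i)"
    using image_f_D sets_cells by (auto simp: ae_eq_set_def R_def)
  show "AE x in lebesgue_nonneg. x \<in> D i \<longrightarrow> F (f i x) = x"
    by (simp add: F_f_inverse)
  show "has_RN_deriv_image lebesgue_nonneg (f i) (D i)" "has_RN_deriv_image lebesgue_nonneg F (R i)"
    unfolding f_def D_def F_def R_def
    by (rule has_RN_deriv_image_cell_shift, rule inj_on_\<sigma>, rule has_RN_deriv_image_cell_shift, rule inj_on_inverse_index)
  fix j
  show "i \<noteq> j \<Longrightarrow> emeasure lebesgue_nonneg (R i \<inter> R j) = 0"
    by (simp add: R_disjoint)
  show "A i j = 0 \<Longrightarrow> emeasure lebesgue_nonneg (R j \<inter> D i) = 0"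
    by (simp add: R_inter_D)
  show "A i j = 1 \<Longrightarrow> emeasure lebesgue_nonneg (R j - D i) = 0"
    using R_subset_D by (simp add: Diff_eq_empty_iff[THEN iffD2])
next
  fix U V assume "finite U \<and> finite V \<and> finite {j. AUV A U V j = 1}"
  then show "ae_eq_set lebesgue_nonneg
      (space lebesgue_nonneg \<inter> (\<Inter>u\<in>U. D u) \<inter> (\<Inter>v\<in>V. space lebesgue_nonneg - D v))
      (\<Union>j\<in>{j. AUV A U V j = 1}. R j)"
    using sets_cells D_boolean_combination by (simp add: ae_eq_set_def R_def)
qed

end

theorem mainTheorem4:
  fixes A :: "nat \<Rightarrow> nat \<Rightarrow> nat"
  assumes "\<forall>i j. A i j \<in> {0, 1}"
    and "\<forall>i. \<exists>j. A i j = 1"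
  shows "\<exists>f D R F. A_infty_branching_system A (restrict_space lebesgue {0::real..}) f D R F"
proof -
  have "\<exists>\<sigma>. bij_betw \<sigma> (domain_cells A i) (colour -` {i})" for i
  proof -
    obtain j where "A i j = 1"
      using assms(2) by blast
    then have "colour -` {j} \<subseteq> domain_cells A i"
      by (auto simp: domain_cells_def)
    then have "infinite (domain_cells A i)"
      using infinite_colour_class infinite_super by blast
    then show ?thesis
      using infinite_colour_class by (blast elim: bij_betw_infinite_nat_sets)
  qed
  then obtain \<sigma> where "\<And>i. bij_betw (\<sigma> i) (domain_cells A i) (colour -` {i})"
    by metis
  then interpret cell_branching A \<sigma>
    using assms(1) by unfold_locales auto
  show ?thesis
    using branching_system by blast
qed

end
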